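(* Let $\mathcal{F}$ be a $3$-uniform linear family and let $\mathcal{M}$ be a maximum matching of $\mathcal{F}$. If $A,B,C$ are three distinct members of $\mathcal{M}$, then $|D_2(A,B,C)|\leq 21$.
   Context: A family is a finite collection of distinct subsets of a vertex set; $3$-uniform means every member has exactly $3$ elements and linear means any two distinct members share at most one vertex. A matching is a collection of pairwise disjoint members; a maximum matching is one of largest possible size. $X_{\mathcal{M}}=\bigcup_{A\in\mathcal{M}}A$, $D_2(\mathcal{F})=\{E\in\mathcal{F}:|E\cap X_{\mathcal{M}}|=2\}$, and for $A,B,C\in\mathcal{M}$, $D_2(A,B,C)=\{E\in D_2(\mathcal{F}): |E\cap(A\cup B\cup C)|=2\}$. *)

theory Defs
  imports Main
begin

definition uniform3 :: "'a set set \<Rightarrow> bool" where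
  "uniform3 F \<longleftrightarrow> (\<forall>E\<in>F. card E = 3)"

definition linear_family :: "'a set set \<Rightarrow> bool" where
  "linear_family F \<longleftrightarrow> (\<forall>E\<in>F. \<forall>E'\<in>F. E \<noteq> E' \<longrightarrow> card (E \<inter> E') \<le> 1)"

definition matching :: "'a set set \<Rightarrow> 'a set set \<Rightarrow> bool" where
  "matching F M \<longleftrightarrow> M \<subseteq> F \<and> (\<forall>A\<in>M. \<forall>B\<in>M. A \<noteq> B \<longrightarrow> A \<inter> B = {})"

definition maximum_matching :: "'a set set \<Rightarrow> 'a set set \<Rightarrow> bool" where
  "maximum_matching F M \<longleftrightarrow> matching F M \<and> (\<forall>M'. matching F M' \<longrightarrow> card M' \<le> card M)"

definition X_M :: "'a set set \<Rightarrow> 'a set" where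
  "X_M M = \<Union>M"

definition D2 :: "'a set set \<Rightarrow> 'a set set \<Rightarrow> 'a set set" where
  "D2 F M = {E\<in>F. card (E \<inter> X_M M) = 2}"

definition D2_ABC :: "'a set set \<Rightarrow> 'a set set \<Rightarrow> 'a set \<Rightarrow> 'a set \<Rightarrow> 'a set \<Rightarrow> 'a set set" where
  "D2_ABC F M A B C = {E\<in>D2 F M. card (E \<inter> (A \<union> B \<union> C)) = 2}"

end

theory Submission
  imports Defs
begin

(*
  Every member of D2(A,B,C) meets A \<union> B \<union> C in two vertices lying in different members of M
  (linearity), and its third vertex lies outside X_M. By linearity the pair determines the member,
  so D2(A,B,C) is a graph on the nine vertices of A \<union> B \<union> C with edges between the triples,
  coloured by the third vertex; linearity also makes the colouring proper. Maximality of M forbids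
  every rainbow matching that could replace matching members: three disjoint edges of distinct
  colours between two triples, or four such edges in all.

  A properly coloured K_{3,3} always has a rainbow perfect matching, so each of the three bipartite
  graphs misses an edge. If each misses two, there are at most 3 * 7 = 21 edges. Otherwise, say,
  B-C misses exactly one edge; its colouring is then forced up to symmetry, and a vertex of B \<union> C
  joined to all of A together with a suitable second vertex would extend a rainbow pair of B-C
  edges to a rainbow 4-matching. This caps the edges towards A at 13, and 8 + 13 = 21.
*)

lemma card_3_obtain:
  assumes "card S = 3" and "x \<in> S"
  obtains y z where "S = {y, z, x}" and "distinct [y, z, x]"
proof -
  have "card (S - {x}) = 2" using assms by (simp add: card_Diff_singleton_if)
  then obtain y z where "S - {x} = {y, z}" "y \<noteq> z" unfolding card_2_iff by auto
  with assms(2) have "S = {y, z, x}" "distinct [y, z, x]" by auto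
  then show thesis by (rule that)
qed

lemma exists_other_avoiding_value:
  assumes "card I = 3" and "inj_on f I"
  shows "\<exists>i\<in>I. i \<noteq> j \<and> f i \<noteq> c"
proof (rule ccontr)
  assume "\<not> ?thesis"
  then have "f ` (I - {j}) \<subseteq> {c}" by blast
  then have "card (f ` (I - {j})) \<le> 1" using card_mono[of "{c}"] by simp
  moreover have "card (f ` (I - {j})) = card (I - {j})"
    using assms(2) by (meson Diff_subset card_image inj_on_subset)
  moreover have "card (I - {j}) \<ge> 2" using assms(1) by (simp add: card_Diff_singleton_if)
  ultimately show False by simp
qed

section \<open>Rainbow-free edge-coloured triples\<close>

definition no_rainbow_3_matching ::
    "('a \<Rightarrow> 'a \<Rightarrow> bool) \<Rightarrow> ('a \<Rightarrow> 'a \<Rightarrow> 'c) \<Rightarrow> 'a set \<Rightarrow> 'a set \<Rightarrow> bool" where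
  "no_rainbow_3_matching adj col P Q \<longleftrightarrow>
    (\<forall>p1 p2 p3 q1 q2 q3. {p1, p2, p3} \<subseteq> P \<longrightarrow> {q1, q2, q3} \<subseteq> Q \<longrightarrow>
       distinct [p1, p2, p3] \<longrightarrow> distinct [q1, q2, q3] \<longrightarrow> adj p1 q1 \<longrightarrow> adj p2 q2 \<longrightarrow> adj p3 q3 \<longrightarrow>
       \<not> distinct [col p1 q1, col p2 q2, col p3 q3])"

lemma no_rainbow_3_matching_commute:
  assumes adj_sym: "\<And>x y. adj x y = adj y x" and col_sym: "\<And>x y. col x y = col y x"
    and no_rainbow: "no_rainbow_3_matching adj col P Q"
  shows "no_rainbow_3_matching adj col Q P"
  unfolding no_rainbow_3_matching_def
proof (intro allI impI)
  fix q1 q2 q3 p1 p2 p3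
  assume Q: "{q1, q2, q3} \<subseteq> Q" and P: "{p1, p2, p3} \<subseteq> P"
    and dq: "distinct [q1, q2, q3]" and dp: "distinct [p1, p2, p3]"
    and "adj q1 p1" "adj q2 p2" "adj q3 p3"
  then have "adj p1 q1" "adj p2 q2" "adj p3 q3" by (simp_all only: adj_sym)
  with P Q dp dq have "\<not> distinct [col p1 q1, col p2 q2, col p3 q3]"
    by (rule no_rainbow[unfolded no_rainbow_3_matching_def, rule_format])
  then show "\<not> distinct [col q1 p1, col q2 p2, col q3 p3]" by (simp only: col_sym not_False_eq_True)
qed

definition edges_between :: "('a \<Rightarrow> 'a \<Rightarrow> bool) \<Rightarrow> 'a set \<Rightarrow> 'a set \<Rightarrow> ('a \<times> 'a) set" where
  "edges_between adj P Q = {(p, q). p \<in> P \<and> q \<in> Q \<and> adj p q}"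

abbreviation edge_count :: "('a \<Rightarrow> 'a \<Rightarrow> bool) \<Rightarrow> 'a set \<Rightarrow> 'a set \<Rightarrow> nat" where
  "edge_count adj P Q \<equiv> card (edges_between adj P Q)"

lemma edge_count_commute:
  assumes "\<And>x y. adj x y = adj y x"
  shows "edge_count adj P Q = edge_count adj Q P"
proof -
  have "{(p, q). p \<in> P \<and> q \<in> Q \<and> adj p q} = prod.swap ` {(q, p). q \<in> Q \<and> p \<in> P \<and> adj q p}"
    using assms by auto
  then show ?thesis unfolding edges_between_def by (simp add: card_image)
qed

lemma edge_count_eq_sum:
  assumes "finite P" and "finite Q"
  shows "edge_count adj P Q = (\<Sum>p\<in>P. card {q \<in> Q. adj p q})"
proof -
  have "{(p, q). p \<in> P \<and> q \<in> Q \<and> adj p q} = Sigma P (\<lambda>p. {q \<in> Q. adj p q})" by auto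
  then show ?thesis unfolding edges_between_def using assms by (simp add: card_SigmaI)
qed

lemma edge_count_le_missing:
  assumes "finite P" and "finite Q" and "N \<subseteq> P \<times> Q" and "\<forall>(p, q) \<in> N. \<not> adj p q"
  shows "edge_count adj P Q \<le> card P * card Q - card N"
proof -
  have "edge_count adj P Q \<le> card (P \<times> Q - N)"
    unfolding edges_between_def using assms by (intro card_mono) auto
  also have "\<dots> = card P * card Q - card N"
    using assms(1-3) by (simp add: card_Diff_subset finite_subset card_cartesian_product)
  finally show ?thesis .
qed

lemma degree_sum_le_13:
  fixes b1 b2 b3 c1 c2 c3 :: nat
  assumes "b1 \<le> 3" "b2 \<le> 3" "b3 \<le> 3" "c1 \<le> 3" "c2 \<le> 3" "c3 \<le> 3"
    and "\<not> (c1 = 3 \<and> 2 \<le> b1)" "\<not> (b1 = 3 \<and> 2 \<le> c2)" "\<not> (b1 = 3 \<and> 2 \<le> c3)"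
    and "\<not> (b2 = 3 \<and> 2 \<le> c1)" "\<not> (c2 = 3 \<and> 2 \<le> b2)" "\<not> (b2 = 3 \<and> 2 \<le> c3)"
    and "\<not> (c1 = 3 \<and> 2 \<le> b3)" "\<not> (c2 = 3 \<and> 2 \<le> b3)" "\<not> (c3 = 3 \<and> b3 = 3)"
  shows "b1 + b2 + b3 + c1 + c2 + c3 \<le> 13"
  using assms
  by (cases "b1 = 3"; cases "b2 = 3"; cases "b3 = 3";
      cases "c1 = 3"; cases "c2 = 3"; cases "c3 = 3"; simp)

locale rainbow_triple =
  fixes A B C :: "'a set" and adj :: "'a \<Rightarrow> 'a \<Rightarrow> bool" and col :: "'a \<Rightarrow> 'a \<Rightarrow> 'c"
  assumes card_A: "card A = 3" and card_B: "card B = 3" and card_C: "card C = 3"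
    and disjoint: "A \<inter> B = {}" "A \<inter> C = {}" "B \<inter> C = {}"
    and adj_sym: "adj x y = adj y x" and col_sym: "col x y = col y x"
    and proper: "adj x y \<Longrightarrow> adj x z \<Longrightarrow> y \<noteq> z \<Longrightarrow> col x y \<noteq> col x z"
    and no_rainbow_AB: "no_rainbow_3_matching adj col A B"
    and no_rainbow_AC: "no_rainbow_3_matching adj col A C"
    and no_rainbow_BC: "no_rainbow_3_matching adj col B C"
    and no_rainbow_4: "distinct [x1, y1, x2, y2, x3, y3, x4, y4] \<Longrightarrow>
      adj x1 y1 \<Longrightarrow> adj x2 y2 \<Longrightarrow> adj x3 y3 \<Longrightarrow> adj x4 y4 \<Longrightarrow>
      \<not> distinct [col x1 y1, col x2 y2, col x3 y3, col x4 y4]"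
begin

lemma finite_A: "finite A" and finite_B: "finite B" and finite_C: "finite C"
  using card_A card_B card_C by (auto intro: card_ge_0_finite)

lemma rainbow_triple_BAC: "rainbow_triple B A C adj col"
  by unfold_locales
    (use card_A card_B card_C disjoint proper no_rainbow_AC no_rainbow_BC no_rainbow_4
       no_rainbow_3_matching_commute[OF adj_sym col_sym no_rainbow_AB]
     in \<open>auto simp: adj_sym col_sym\<close>)

lemma rainbow_triple_ACB: "rainbow_triple A C B adj col"
  by unfold_locales
    (use card_A card_B card_C disjoint proper no_rainbow_AB no_rainbow_AC no_rainbow_4
       no_rainbow_3_matching_commute[OF adj_sym col_sym no_rainbow_BC]
     in \<open>auto simp: adj_sym col_sym\<close>)

lemma no_rainbow_3_matching_has_non_edge:
  assumes no_rainbow: "no_rainbow_3_matching adj col P Q" and "card P = 3" and "card Q = 3"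
  shows "\<exists>p\<in>P. \<exists>q\<in>Q. \<not> adj p q"
proof (rule ccontr)
  assume "\<not> ?thesis"
  then have complete: "\<And>p q. p \<in> P \<Longrightarrow> q \<in> Q \<Longrightarrow> adj p q" by blast
  obtain p1 p2 p3 where P: "P = {p1, p2, p3}" "distinct [p1, p2, p3]"
    using \<open>card P = 3\<close> unfolding card_3_iff by auto
  obtain q1 q2 q3 where Q: "Q = {q1, q2, q3}" "distinct [q1, q2, q3]"
    using \<open>card Q = 3\<close> unfolding card_3_iff by auto
  have not_rainbow: "\<not> distinct [col x1 y1, col x2 y2, col x3 y3]"
    if "{x1, x2, x3} = P" "{y1, y2, y3} = Q" "distinct [x1, x2, x3]" "distinct [y1, y2, y3]"
    for x1 x2 x3 y1 y2 y3
    by (rule no_rainbow[unfolded no_rainbow_3_matching_def, rule_format])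
      (use that complete in auto)
  have "\<not> distinct [col p1 q1, col p2 q2, col p3 q3]" "\<not> distinct [col p1 q1, col p2 q3, col p3 q2]"
    "\<not> distinct [col p1 q2, col p2 q1, col p3 q3]" "\<not> distinct [col p1 q2, col p2 q3, col p3 q1]"
    "\<not> distinct [col p1 q3, col p2 q1, col p3 q2]" "\<not> distinct [col p1 q3, col p2 q2, col p3 q1]"
    by (rule not_rainbow; use P Q in auto)+
  moreover have "col p q \<noteq> col p q'" if "p \<in> P" "q \<in> Q" "q' \<in> Q" "q \<noteq> q'" for p q q'
    using proper complete that by blast
  moreover have "col p q \<noteq> col p' q" if "p \<in> P" "p' \<in> P" "q \<in> Q" "p \<noteq> p'" for p p' q
    using proper[of q p p'] complete that by (simp add: adj_sym col_sym)
  ultimately show False using P Q by simp (smt (verit))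
qed

lemma colour_pattern:
  assumes no_rainbow: "no_rainbow_3_matching adj col {b1, b2, b3} {c1, c2, c3}"
    and db: "distinct [b1, b2, b3]" and dc: "distinct [c1, c2, c3]"
    and edges: "adj b1 c1" "adj b1 c2" "adj b1 c3" "adj b2 c1" "adj b2 c2" "adj b2 c3"
      "adj b3 c1" "adj b3 c2"
  shows "(col b1 c1 = col b2 c3 \<and> col b1 c2 = col b3 c1 \<and>
          col b2 c2 = col b1 c3 \<and> col b2 c1 = col b3 c2) \<or>
         (col c1 b1 = col c2 b3 \<and> col c1 b2 = col c3 b1 \<and>
          col c2 b2 = col c1 b3 \<and> col c2 b1 = col c3 b2)"
proof -
  have not_rainbow: "\<not> distinct [col x1 y1, col x2 y2, col x3 y3]"
    if "{x1, x2, x3} = {b1, b2, b3}" "{y1, y2, y3} = {c1, c2, c3}"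
      "distinct [x1, x2, x3]" "distinct [y1, y2, y3]" "adj x1 y1" "adj x2 y2" "adj x3 y3"
    for x1 x2 x3 y1 y2 y3
    by (rule no_rainbow[unfolded no_rainbow_3_matching_def, rule_format]) (use that in auto)
  have "\<not> distinct [col b1 c1, col b2 c3, col b3 c2]" "\<not> distinct [col b1 c2, col b2 c3, col b3 c1]"
    "\<not> distinct [col b1 c3, col b2 c1, col b3 c2]" "\<not> distinct [col b1 c3, col b2 c2, col b3 c1]"
    by (rule not_rainbow; use db dc edges in auto)+
  moreover have "col b q \<noteq> col b q'" if "adj b q" "adj b q'" "q \<noteq> q'" for b q q'
    using proper that by blast
  moreover have "col p c \<noteq> col p' c" if "adj p c" "adj p' c" "p \<noteq> p'" for p p' c
    using proper[of c p p'] that by (simp add: adj_sym col_sym)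
  ultimately have "(col b1 c1 = col b2 c3 \<and> col b1 c2 = col b3 c1 \<and>
                    col b2 c2 = col b1 c3 \<and> col b2 c1 = col b3 c2) \<or>
                   (col b1 c1 = col b3 c2 \<and> col b2 c1 = col b1 c3 \<and>
                    col b2 c2 = col b3 c1 \<and> col b1 c2 = col b2 c3)"
    using edges db dc by simp (smt (verit))
  then show ?thesis by (simp add: col_sym)
qed

lemma inj_on_colours: "inj_on (col v) {a. adj v a}"
  by (rule inj_onI) (metis mem_Collect_eq proper)

lemma neighbour_avoiding_colours:
  assumes "finite K" and "card K < card {a \<in> A. adj v a}"
  shows "\<exists>a\<in>A. adj v a \<and> col v a \<notin> K"
proof (rule ccontr)
  assume "\<not> ?thesis"
  then have "col v ` {a \<in> A. adj v a} \<subseteq> K" by blast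
  moreover have "inj_on (col v) {a \<in> A. adj v a}" by (rule inj_on_subset[OF inj_on_colours]) blast
  ultimately have "card {a \<in> A. adj v a} \<le> card K" using \<open>finite K\<close> by (metis card_inj_on_le)
  with assms(2) show False by simp
qed

lemma full_neighbourhood:
  assumes "card {a \<in> A. adj v a} = 3"
  shows "\<forall>a\<in>A. adj v a"
proof -
  have "{a \<in> A. adj v a} = A" using finite_A assms card_A by (intro card_subset_eq) auto
  then show ?thesis by blast
qed

text \<open>The \<open>A\<close>-edges at \<open>v\<close> avoid both colours of the pair, and since they have three
  distinct colours one of them avoids the colour of the \<open>A\<close>-edge at \<open>w\<close> as well; together
  with the pair this is a rainbow \<open>4\<close>-matching.\<close>
lemma heavy_vertex_conflict:
  assumes distinct: "distinct [v, w, p1, q1, p2, q2]"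
    and outside: "{v, w, p1, q1, p2, q2} \<inter> A = {}"
    and pair: "adj p1 q1" "adj p2 q2" "col p1 q1 = \<kappa>1" "col p2 q2 = \<kappa>2" "\<kappa>1 \<noteq> \<kappa>2"
    and heavy: "\<forall>a\<in>A. adj v a"
    and v_sees: "adj v y1" "y1 \<notin> A" "col v y1 = \<kappa>1" "adj v y2" "y2 \<notin> A" "col v y2 = \<kappa>2"
    and w_edge: "a \<in> A" "adj w a" "col w a \<notin> {\<kappa>1, \<kappa>2}"
  shows False
proof -
  have "inj_on (col v) A" by (rule inj_on_subset[OF inj_on_colours]) (use heavy in blast)
  then obtain i where i: "i \<in> A" "i \<noteq> a" "col v i \<noteq> col w a"
    using exists_other_avoiding_value[OF card_A, of "col v" a "col w a"] by blast
  have "col v i \<noteq> \<kappa>1" "col v i \<noteq> \<kappa>2"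
    using proper[of v i y1] proper[of v i y2] heavy i v_sees by auto
  then have "distinct [col v i, col w a, col p1 q1, col p2 q2]" using i w_edge pair by auto
  moreover have "distinct [v, i, w, a, p1, q1, p2, q2]" using distinct outside i w_edge by auto
  ultimately show False using no_rainbow_4 heavy i(1) w_edge(2) pair(1,2) by blast
qed

lemma heavy_light_conflict:
  assumes "distinct [v, w, p1, q1, p2, q2]" and "{v, w, p1, q1, p2, q2} \<inter> A = {}"
    and "adj p1 q1" "adj p2 q2" "col p1 q1 = \<kappa>1" "col p2 q2 = \<kappa>2" "\<kappa>1 \<noteq> \<kappa>2"
    and "card {a \<in> A. adj v a} = 3"
    and "adj v y1" "y1 \<notin> A" "col v y1 = \<kappa>1" "adj v y2" "y2 \<notin> A" "col v y2 = \<kappa>2"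
    and "2 \<le> card {a \<in> A. adj w a}" "adj w z" "z \<notin> A" "col w z \<in> {\<kappa>1, \<kappa>2}"
  shows False
proof -
  have "card ({\<kappa>1, \<kappa>2} - {col w z}) < card {a \<in> A. adj w a}"
    using assms(15,18) by (auto simp: card_insert_if)
  then obtain a where a: "a \<in> A" "adj w a" "col w a \<notin> {\<kappa>1, \<kappa>2} - {col w z}"
    using neighbour_avoiding_colours[of "{\<kappa>1, \<kappa>2} - {col w z}"] by auto
  moreover have "col w a \<noteq> col w z" using proper[of w a z] a assms(16,17) by blast
  ultimately have "col w a \<notin> {\<kappa>1, \<kappa>2}" by blast
  with a(1,2) show False
    using heavy_vertex_conflict[OF assms(1-7) full_neighbourhood[OF assms(8)] assms(9-14)] by blast
qed

lemma heavy_heavy_conflict: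
  assumes "distinct [v, w, p1, q1, p2, q2]" and "{v, w, p1, q1, p2, q2} \<inter> A = {}"
    and "adj p1 q1" "adj p2 q2" "col p1 q1 = \<kappa>1" "col p2 q2 = \<kappa>2" "\<kappa>1 \<noteq> \<kappa>2"
    and "card {a \<in> A. adj v a} = 3"
    and "adj v y1" "y1 \<notin> A" "col v y1 = \<kappa>1" "adj v y2" "y2 \<notin> A" "col v y2 = \<kappa>2"
    and "card {a \<in> A. adj w a} = 3"
  shows False
proof -
  have "card {\<kappa>1, \<kappa>2} < card {a \<in> A. adj w a}" using assms(15) by (simp add: card_insert_if)
  then obtain a where "a \<in> A" "adj w a" "col w a \<notin> {\<kappa>1, \<kappa>2}"
    using neighbour_avoiding_colours[of "{\<kappa>1, \<kappa>2}"] by auto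
  then show False
    using heavy_vertex_conflict[OF assms(1-7) full_neighbourhood[OF assms(8)] assms(9-14)] by blast
qed

lemma edge_count_to_A_le_13:
  assumes d: "distinct [b1, b2, b3, c1, c2, c3]" and outside: "{b1, b2, b3, c1, c2, c3} \<inter> A = {}"
    and edges: "adj b1 c1" "adj b1 c2" "adj b1 c3" "adj b2 c1" "adj b2 c2" "adj b2 c3"
      "adj b3 c1" "adj b3 c2"
    and pattern: "col b1 c1 = col b2 c3" "col b1 c2 = col b3 c1"
      "col b2 c2 = col b1 c3" "col b2 c1 = col b3 c2"
  shows "edge_count adj {b1, b2, b3} A + edge_count adj {c1, c2, c3} A \<le> 13"
proof -
  obtain \<alpha> \<beta> \<gamma> \<delta>
    where colours: "col b1 c1 = \<alpha>" "col b2 c3 = \<alpha>" "col b1 c2 = \<beta>" "col b3 c1 = \<beta>"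
      "col b2 c2 = \<gamma>" "col b1 c3 = \<gamma>" "col b2 c1 = \<delta>" "col b3 c2 = \<delta>"
    using pattern by metis
  note colours' = colours[THEN trans[OF col_sym]] and edges' = edges[THEN iffD1[OF adj_sym]]
  have "distinct [\<alpha>, \<beta>, \<gamma>, \<delta>]"
    using proper[of b1 c1 c2] proper[of b1 c1 c3] proper[of b1 c2 c3] proper[of c1 b1 b2]
      proper[of c1 b3 b2] proper[of b2 c2 c1] d edges edges' colours colours' by auto
  note facts = this d outside edges edges' colours colours'
  define D where "D v = card {a \<in> A. adj v a}" for v
  have D_le: "D v \<le> 3" for v
    unfolding D_def using card_A card_mono[OF finite_A, of "{a \<in> A. adj v a}"] by auto
  txt \<open>In each conflict below the vertex joined to all of \<open>A\<close> comes first; the rainbow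
    pair lives on the four remaining vertices of \<open>B \<union> C\<close>.\<close>
  have "\<not> (D c1 = 3 \<and> 2 \<le> D b1)"
    using heavy_light_conflict[of c1 b1 b2 c3 b3 c2 \<alpha> \<delta> b1 b2 c1] facts unfolding D_def by auto
  moreover have "\<not> (D b1 = 3 \<and> 2 \<le> D c2)"
    using heavy_light_conflict[of b1 c2 b2 c3 b3 c1 \<alpha> \<beta> c1 c2 b1] facts unfolding D_def by auto
  moreover have "\<not> (D b1 = 3 \<and> 2 \<le> D c3)"
    using heavy_light_conflict[of b1 c3 b2 c2 b3 c1 \<gamma> \<beta> c3 c2 b1] facts unfolding D_def by auto
  moreover have "\<not> (D b2 = 3 \<and> 2 \<le> D c1)"
    using heavy_light_conflict[of b2 c1 b1 c3 b3 c2 \<gamma> \<delta> c2 c1 b2] facts unfolding D_def by auto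
  moreover have "\<not> (D c2 = 3 \<and> 2 \<le> D b2)"
    using heavy_light_conflict[of c2 b2 b1 c3 b3 c1 \<gamma> \<beta> b2 b1 c2] facts unfolding D_def by auto
  moreover have "\<not> (D b2 = 3 \<and> 2 \<le> D c3)"
    using heavy_light_conflict[of b2 c3 b1 c1 b3 c2 \<alpha> \<delta> c3 c1 b2] facts unfolding D_def by auto
  moreover have "\<not> (D c1 = 3 \<and> 2 \<le> D b3)"
    using heavy_light_conflict[of c1 b3 b1 c2 b2 c3 \<beta> \<alpha> b3 b1 c1] facts unfolding D_def by auto
  moreover have "\<not> (D c2 = 3 \<and> 2 \<le> D b3)"
    using heavy_light_conflict[of c2 b3 b1 c3 b2 c1 \<gamma> \<delta> b2 b3 c2] facts unfolding D_def by auto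
  moreover have "\<not> (D c3 = 3 \<and> D b3 = 3)"
    using heavy_heavy_conflict[of c3 b3 b1 c1 b2 c2 \<alpha> \<gamma> b2 b1] facts unfolding D_def by auto
  ultimately have "D b1 + D b2 + D b3 + D c1 + D c2 + D c3 \<le> 13"
    by (rule degree_sum_le_13[OF D_le D_le D_le D_le D_le D_le])
  moreover have "edge_count adj {x, y, z} A = D x + D y + D z" if "distinct [x, y, z]" for x y z
    using that finite_A by (simp add: edge_count_eq_sum D_def)
  ultimately show ?thesis using d by simp
qed

lemma edge_count_le_21_if_one_non_edge:
  assumes "b3 \<in> B" and "c3 \<in> C" and "\<not> adj b3 c3"
    and others: "\<forall>b\<in>B. \<forall>c\<in>C. (b, c) \<noteq> (b3, c3) \<longrightarrow> adj b c"
  shows "edge_count adj A B + edge_count adj A C + edge_count adj B C \<le> 21"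
proof -
  obtain b1 b2 where B: "B = {b1, b2, b3}" "distinct [b1, b2, b3]"
    using card_B \<open>b3 \<in> B\<close> by (rule card_3_obtain)
  obtain c1 c2 where C: "C = {c1, c2, c3}" "distinct [c1, c2, c3]"
    using card_C \<open>c3 \<in> C\<close> by (rule card_3_obtain)
  have d: "distinct [b1, b2, b3, c1, c2, c3]" and outside: "{b1, b2, b3, c1, c2, c3} \<inter> A = {}"
    using B C disjoint by auto
  have edges: "adj b1 c1" "adj b1 c2" "adj b1 c3" "adj b2 c1" "adj b2 c2" "adj b2 c3"
    "adj b3 c1" "adj b3 c2"
    using others B C d by auto
  have "edge_count adj B C \<le> 3 * 3 - 1"
    using edge_count_le_missing[OF finite_B finite_C, of "{(b3, c3)}"] card_B card_C assms(1-3)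
    by simp
  moreover have "edge_count adj {b1, b2, b3} A + edge_count adj {c1, c2, c3} A \<le> 13"
    using colour_pattern[OF no_rainbow_BC[unfolded B C] B(2) C(2) edges]
  proof (elim disjE conjE)
    assume "col b1 c1 = col b2 c3" "col b1 c2 = col b3 c1"
      "col b2 c2 = col b1 c3" "col b2 c1 = col b3 c2"
    then show ?thesis by (rule edge_count_to_A_le_13[OF d outside edges])
  next
    assume "col c1 b1 = col c2 b3" "col c1 b2 = col c3 b1"
      "col c2 b2 = col c1 b3" "col c2 b1 = col c3 b2"
    moreover have "distinct [c1, c2, c3, b1, b2, b3]" "{c1, c2, c3, b1, b2, b3} \<inter> A = {}"
      using d outside by auto
    ultimately have "edge_count adj {c1, c2, c3} A + edge_count adj {b1, b2, b3} A \<le> 13"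
      using edge_count_to_A_le_13[of c1 c2 c3 b1 b2 b3] edges[THEN iffD1[OF adj_sym]] by blast
    then show ?thesis by simp
  qed
  ultimately show ?thesis
    using B C edge_count_commute[OF adj_sym, where P = A and Q = B]
      edge_count_commute[OF adj_sym, where P = A and Q = C] by simp
qed

lemma sparse_or_one_non_edge:
  assumes "no_rainbow_3_matching adj col P Q" and "card P = 3" and "card Q = 3"
  shows "edge_count adj P Q \<le> 7 \<or>
    (\<exists>p\<in>P. \<exists>q\<in>Q. \<not> adj p q \<and> (\<forall>x\<in>P. \<forall>y\<in>Q. (x, y) \<noteq> (p, q) \<longrightarrow> adj x y))"
proof -
  obtain p q where pq: "p \<in> P" "q \<in> Q" "\<not> adj p q"
    using no_rainbow_3_matching_has_non_edge[OF assms] by blast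
  show ?thesis
  proof (cases "\<forall>x\<in>P. \<forall>y\<in>Q. (x, y) \<noteq> (p, q) \<longrightarrow> adj x y")
    case True
    with pq show ?thesis by blast
  next
    case False
    then obtain p' q' where "p' \<in> P" "q' \<in> Q" "(p', q') \<noteq> (p, q)" "\<not> adj p' q'" by blast
    moreover have "finite P" "finite Q" using assms(2,3) by (auto intro: card_ge_0_finite)
    ultimately have "edge_count adj P Q \<le> 3 * 3 - 2"
      using edge_count_le_missing[of P Q "{(p, q), (p', q')}"] pq assms(2,3) by auto
    then show ?thesis by simp
  qed
qed

theorem edge_count_le_21: "edge_count adj A B + edge_count adj A C + edge_count adj B C \<le> 21"
proof -
  consider "edge_count adj A B \<le> 7" "edge_count adj A C \<le> 7" "edge_count adj B C \<le> 7"
    | (BC) b c where "b \<in> B" "c \<in> C" "\<not> adj b c"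
        "\<forall>x\<in>B. \<forall>y\<in>C. (x, y) \<noteq> (b, c) \<longrightarrow> adj x y"
    | (AC) a c where "a \<in> A" "c \<in> C" "\<not> adj a c"
        "\<forall>x\<in>A. \<forall>y\<in>C. (x, y) \<noteq> (a, c) \<longrightarrow> adj x y"
    | (AB) a b where "a \<in> A" "b \<in> B" "\<not> adj a b"
        "\<forall>x\<in>A. \<forall>y\<in>B. (x, y) \<noteq> (a, b) \<longrightarrow> adj x y"
    using sparse_or_one_non_edge[OF no_rainbow_AB card_A card_B]
      sparse_or_one_non_edge[OF no_rainbow_AC card_A card_C]
      sparse_or_one_non_edge[OF no_rainbow_BC card_B card_C] by blast
  then show ?thesis
  proof cases
    case 1
    then show ?thesis by simp
  next
    case BC
    then show ?thesis by (rule edge_count_le_21_if_one_non_edge)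
  next
    case AC
    then have "edge_count adj B A + edge_count adj B C + edge_count adj A C \<le> 21"
      by (rule rainbow_triple.edge_count_le_21_if_one_non_edge[OF rainbow_triple_BAC])
    then show ?thesis using edge_count_commute[OF adj_sym, where P = A and Q = B] by simp
  next
    case AB
    then have "edge_count adj C A + edge_count adj C B + edge_count adj A B \<le> 21"
      by (rule rainbow_triple.edge_count_le_21_if_one_non_edge
          [OF rainbow_triple.rainbow_triple_BAC[OF rainbow_triple_ACB]])
    then show ?thesis
      using edge_count_commute[OF adj_sym, where P = A and Q = C]
        edge_count_commute[OF adj_sym, where P = B and Q = C] by simp
  qed
qed

end

section \<open>The coloured graph of \<open>D2(A,B,C)\<close>\<close>

lemma matching_disjoint_from_replacement:
  assumes "matching F M" and "S \<subseteq> M" and "N \<in> M - S" and "E \<inter> X_M M \<subseteq> \<Union>S"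
  shows "N \<inter> E = {}"
proof -
  have "N \<inter> K = {}" if "K \<in> S" for K
  proof -
    have "N \<noteq> K" "N \<in> M" "K \<in> M" using assms(2,3) that by auto
    then show ?thesis using assms(1) unfolding matching_def by simp
  qed
  then have "N \<inter> \<Union>S = {}" by auto
  moreover have "N \<inter> E \<subseteq> N \<inter> \<Union>S" using assms(3,4) unfolding X_M_def by auto
  ultimately show ?thesis by auto
qed

lemma matching_replace:
  assumes M: "matching F M" and "S \<subseteq> M"
    and T: "T \<subseteq> F" "\<forall>E\<in>T. \<forall>E'\<in>T. E \<noteq> E' \<longrightarrow> E \<inter> E' = {}" and inside: "\<forall>E\<in>T. E \<inter> X_M M \<subseteq> \<Union>S"
  shows "matching F ((M - S) \<union> T)"
  unfolding matching_def
proof (intro conjI ballI impI)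
  show "M - S \<union> T \<subseteq> F" using M T(1) unfolding matching_def by auto
next
  fix N N' assume "N \<in> M - S \<union> T" "N' \<in> M - S \<union> T" and "N \<noteq> N'"
  then consider "N \<in> M" "N' \<in> M" | "N \<in> T" "N' \<in> T" | "N \<in> M - S" "N' \<in> T" | "N \<in> T" "N' \<in> M - S"
    by auto
  then show "N \<inter> N' = {}"
  proof cases
    case 1
    then show ?thesis using M \<open>N \<noteq> N'\<close> unfolding matching_def by simp
  next
    case 2
    then show ?thesis using T(2) \<open>N \<noteq> N'\<close> by simp
  next
    case 3
    then show ?thesis using matching_disjoint_from_replacement[OF M \<open>S \<subseteq> M\<close>] inside by simp
  next
    case 4
    then show ?thesis using matching_disjoint_from_replacement[OF M \<open>S \<subseteq> M\<close>] inside
      by (simp add: Int_commute)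
  qed
qed

lemma maximum_matching_replacement_le:
  assumes max: "maximum_matching F M" and "finite F" and "S \<subseteq> M"
    and T: "T \<subseteq> F" "finite T" "{} \<notin> T" "\<forall>E\<in>T. \<forall>E'\<in>T. E \<noteq> E' \<longrightarrow> E \<inter> E' = {}"
    and inside: "\<forall>E\<in>T. E \<inter> X_M M \<subseteq> \<Union>S"
  shows "card T \<le> card S"
proof -
  have M: "matching F M" and "M \<subseteq> F" using max unfolding maximum_matching_def matching_def by auto
  from \<open>M \<subseteq> F\<close> \<open>finite F\<close> have "finite M" by (rule finite_subset)
  have "card ((M - S) \<union> T) \<le> card M"
    using max matching_replace[OF M \<open>S \<subseteq> M\<close> T(1,4) inside] unfolding maximum_matching_def by auto
  moreover have "(M - S) \<inter> T = {}"
  proof (rule ccontr)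
    assume "(M - S) \<inter> T \<noteq> {}"
    then obtain E where "E \<in> M - S" "E \<in> T" by auto
    then have "E = {}" using matching_disjoint_from_replacement[OF M \<open>S \<subseteq> M\<close>, of E E] inside by auto
    with \<open>E \<in> T\<close> T(3) show False by simp
  qed
  ultimately have "card (M - S) + card T \<le> card M"
    using \<open>finite M\<close> T(2) by (simp add: card_Un_disjoint)
  moreover have "card (M - S) = card M - card S" "card S \<le> card M"
    using \<open>S \<subseteq> M\<close> \<open>finite M\<close> by (auto simp: card_Diff_subset finite_subset card_mono)
  ultimately show ?thesis by linarith
qed

lemma linear_family_eq_if_two_common:
  assumes "linear_family F" and "E \<in> F" and "E' \<in> F" and "finite E"
    and "x \<noteq> y" and "{x, y} \<subseteq> E" and "{x, y} \<subseteq> E'"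
  shows "E = E'"
proof (rule ccontr)
  assume "E \<noteq> E'"
  with assms(1-3) have "card (E \<inter> E') \<le> 1" unfolding linear_family_def by auto
  moreover have "card {x, y} \<le> card (E \<inter> E')" using assms(4,6,7) by (intro card_mono) auto
  ultimately show False using \<open>x \<noteq> y\<close> by simp
qed

lemma finite_edges_between: "finite P \<Longrightarrow> finite Q \<Longrightarrow> finite (edges_between adj P Q)"
  unfolding edges_between_def by (rule finite_subset[of _ "P \<times> Q"]) auto

locale D2_setting =
  fixes F M :: "'a set set" and A B C :: "'a set"
  assumes finite_F: "finite F" and uniform: "uniform3 F" and linear: "linear_family F"
    and max_matching: "maximum_matching F M"
    and members: "A \<in> M" "B \<in> M" "C \<in> M" and distinct_members: "A \<noteq> B" "A \<noteq> C" "B \<noteq> C"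
begin

definition adj :: "'a \<Rightarrow> 'a \<Rightarrow> bool" where
  "adj x y \<longleftrightarrow> x \<noteq> y \<and> x \<in> A \<union> B \<union> C \<and> y \<in> A \<union> B \<union> C \<and> (\<exists>E\<in>D2_ABC F M A B C. x \<in> E \<and> y \<in> E)"

text \<open>The colour of a pair is the third vertex, outside \<open>X_M\<close>, of the member of \<open>D2(A,B,C)\<close>
  through it; linearity makes this member unique.\<close>
definition col :: "'a \<Rightarrow> 'a \<Rightarrow> 'a" where
  "col x y = (SOME u. u \<notin> X_M M \<and> {x, y, u} \<in> D2_ABC F M A B C)"

lemma M_subset_F: "M \<subseteq> F"
  using max_matching unfolding maximum_matching_def matching_def by auto

lemma card_member: "E \<in> F \<Longrightarrow> card E = 3"
  using uniform unfolding uniform3_def by auto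

lemma finite_member: "E \<in> F \<Longrightarrow> finite E"
  using card_member by (auto intro: card_ge_0_finite)

lemma D2_ABC_subset_F: "D2_ABC F M A B C \<subseteq> F"
  unfolding D2_ABC_def D2_def by auto

lemma members_subset_X_M: "A \<union> B \<union> C \<subseteq> X_M M"
  unfolding X_M_def using members by auto

lemma D2_ABC_shape:
  assumes "E \<in> D2_ABC F M A B C"
  obtains x y u
  where "E = {x, y, u}" "x \<noteq> y" "x \<in> A \<union> B \<union> C" "y \<in> A \<union> B \<union> C" "u \<notin> X_M M"
proof -
  have "E \<in> F" using assms D2_ABC_subset_F by auto
  then have "finite E" "card E = 3" using card_member finite_member by auto
  have two: "card (E \<inter> X_M M) = 2" "card (E \<inter> (A \<union> B \<union> C)) = 2"
    using assms unfolding D2_ABC_def D2_def by auto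
  then have inside: "E \<inter> (A \<union> B \<union> C) = E \<inter> X_M M"
    using members_subset_X_M \<open>finite E\<close> by (intro card_subset_eq) auto
  obtain x y where xy: "E \<inter> (A \<union> B \<union> C) = {x, y}" "x \<noteq> y" using two(2) unfolding card_2_iff by auto
  have "card (E - X_M M) = 1"
    using two(1) \<open>card E = 3\<close> \<open>finite E\<close> by (simp add: card_Diff_subset_Int)
  then obtain u where u: "E - X_M M = {u}" by (rule card_1_singletonE)
  have "E = {x, y, u}" using xy(1) inside u by auto
  moreover have "x \<in> A \<union> B \<union> C" "y \<in> A \<union> B \<union> C" "u \<notin> X_M M" using xy(1) u by auto
  ultimately show thesis using that[of x y u] xy(2) by blast
qed

lemma col_eq:
  assumes "{x, y, u} \<in> D2_ABC F M A B C" and "x \<noteq> y" and "x \<in> A \<union> B \<union> C" "y \<in> A \<union> B \<union> C"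
    and "u \<notin> X_M M"
  shows "col x y = u"
proof -
  have "\<exists>u. u \<notin> X_M M \<and> {x, y, u} \<in> D2_ABC F M A B C" using assms by auto
  then have col: "col x y \<notin> X_M M" "{x, y, col x y} \<in> D2_ABC F M A B C"
    unfolding col_def by (metis (mono_tags, lifting) someI_ex)+
  then have "{x, y, col x y} = {x, y, u}"
    using linear_family_eq_if_two_common[OF linear, of "{x, y, col x y}" "{x, y, u}" x y]
      assms(1,2) D2_ABC_subset_F finite_member by auto
  moreover have "col x y \<noteq> x" "col x y \<noteq> y" using col(1) assms(3,4) members_subset_X_M by auto
  ultimately show ?thesis by auto
qed

lemma adj_edge:
  assumes "adj x y"
  shows "{x, y, col x y} \<in> D2_ABC F M A B C" and "col x y \<notin> X_M M"
proof -
  obtain E where E: "E \<in> D2_ABC F M A B C" "x \<in> E" "y \<in> E"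
    and xy: "x \<noteq> y" "x \<in> A \<union> B \<union> C" "y \<in> A \<union> B \<union> C"
    using assms unfolding adj_def by auto
  obtain x' y' u where E_eq: "E = {x', y', u}" "x' \<noteq> y'" and u: "u \<notin> X_M M"
    using D2_ABC_shape[OF E(1)] by metis
  have "x \<noteq> u" "y \<noteq> u" using xy u members_subset_X_M by auto
  then have "E = {x, y, u}" using E E_eq xy(1) by auto
  with E(1) xy u have "col x y = u" by (intro col_eq) auto
  with \<open>E = {x, y, u}\<close> E(1) u show "{x, y, col x y} \<in> D2_ABC F M A B C" "col x y \<notin> X_M M" by auto
qed

lemma adj_sym: "adj x y = adj y x"
  unfolding adj_def by auto

lemma col_sym: "col x y = col y x"
  unfolding col_def by (simp add: insert_commute)

lemma proper: "adj x y \<Longrightarrow> adj x z \<Longrightarrow> y \<noteq> z \<Longrightarrow> col x y \<noteq> col x z"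
proof
  assume "adj x y" "adj x z" "y \<noteq> z" and same: "col x y = col x z"
  have "x \<noteq> col x y" using adj_edge(2)[OF \<open>adj x y\<close>] \<open>adj x y\<close> members_subset_X_M
    unfolding adj_def by auto
  then have "{x, y, col x y} = {x, z, col x z}"
    using linear_family_eq_if_two_common[OF linear, of "{x, y, col x y}" "{x, z, col x z}" x "col x y"]
      adj_edge(1)[OF \<open>adj x y\<close>] adj_edge(1)[OF \<open>adj x z\<close>] D2_ABC_subset_F finite_member same by auto
  moreover have "z \<noteq> x" "z \<noteq> col x y"
    using \<open>adj x z\<close> adj_edge(2)[OF \<open>adj x z\<close>] members_subset_X_M same unfolding adj_def by auto
  ultimately show False using \<open>y \<noteq> z\<close> by auto
qed

lemma members_disjoint: "N \<in> M \<Longrightarrow> N' \<in> M \<Longrightarrow> N \<noteq> N' \<Longrightarrow> N \<inter> N' = {}"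
  using max_matching unfolding maximum_matching_def matching_def by auto

lemma rainbow_matching_le:
  assumes "S \<subseteq> M" and "finite P"
    and edges: "\<And>x y. (x, y) \<in> P \<Longrightarrow> adj x y \<and> x \<in> \<Union>S \<and> y \<in> \<Union>S"
    and rainbow: "\<And>x y x' y'. (x, y) \<in> P \<Longrightarrow> (x', y') \<in> P \<Longrightarrow> (x, y) \<noteq> (x', y') \<Longrightarrow>
      {x, y} \<inter> {x', y'} = {} \<and> col x y \<noteq> col x' y'"
  shows "card P \<le> card S"
proof -
  define edge where "edge p = {fst p, snd p, col (fst p) (snd p)}" for p
  have "\<Union>S \<subseteq> X_M M" using \<open>S \<subseteq> M\<close> unfolding X_M_def by auto
  then have in_D2: "edge p \<in> D2_ABC F M A B C" and inside: "edge p \<inter> X_M M \<subseteq> \<Union>S" if "p \<in> P" for p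
    using that edges[of "fst p" "snd p"] adj_edge[of "fst p" "snd p"] unfolding edge_def by auto
  have disjoint: "edge p \<inter> edge p' = {}" if "p \<in> P" "p' \<in> P" "p \<noteq> p'" for p p'
  proof -
    obtain x y x' y' where p: "p = (x, y)" "p' = (x', y')" by fastforce
    have "col x y \<notin> X_M M" "col x' y' \<notin> X_M M" "{x, y, x', y'} \<subseteq> X_M M"
      using adj_edge(2) edges that \<open>\<Union>S \<subseteq> X_M M\<close> unfolding p by auto
    then show ?thesis using rainbow[of x y x' y'] that unfolding p edge_def by auto
  qed
  have "inj_on edge P"
  proof (rule inj_onI, rule ccontr)
    fix p p' assume "p \<in> P" "p' \<in> P" "edge p = edge p'" "p \<noteq> p'"
    then have "edge p = {}" using disjoint[of p p'] by simp
    then show False unfolding edge_def by simp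
  qed
  moreover have "card (edge ` P) \<le> card S"
  proof (rule maximum_matching_replacement_le[OF max_matching finite_F \<open>S \<subseteq> M\<close>])
    show "edge ` P \<subseteq> F" using in_D2 D2_ABC_subset_F by auto
    show "finite (edge ` P)" using \<open>finite P\<close> by simp
    show "{} \<notin> edge ` P" unfolding edge_def by auto
    show "\<forall>E\<in>edge ` P. \<forall>E'\<in>edge ` P. E \<noteq> E' \<longrightarrow> E \<inter> E' = {}"
      using disjoint by (metis imageE)
    show "\<forall>E\<in>edge ` P. E \<inter> X_M M \<subseteq> \<Union>S" using inside by auto
  qed
  ultimately show ?thesis by (simp add: card_image)
qed

lemma adj_in_members: "adj x y \<Longrightarrow> x \<in> A \<union> B \<union> C \<and> y \<in> A \<union> B \<union> C"
  unfolding adj_def by auto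

lemma no_rainbow_4_matching:
  assumes d: "distinct [x1, y1, x2, y2, x3, y3, x4, y4]"
    and edges: "adj x1 y1" "adj x2 y2" "adj x3 y3" "adj x4 y4"
  shows "\<not> distinct [col x1 y1, col x2 y2, col x3 y3, col x4 y4]"
proof
  assume rainbow: "distinct [col x1 y1, col x2 y2, col x3 y3, col x4 y4]"
  define P where "P = {(x1, y1), (x2, y2), (x3, y3), (x4, y4)}"
  have "card P \<le> card {A, B, C}"
  proof (rule rainbow_matching_le)
    show "{A, B, C} \<subseteq> M" using members by auto
    show "(x, y) \<in> P \<Longrightarrow> adj x y \<and> x \<in> \<Union>{A, B, C} \<and> y \<in> \<Union>{A, B, C}" for x y
      using edges adj_in_members unfolding P_def by auto
    show "(x, y) \<in> P \<Longrightarrow> (x', y') \<in> P \<Longrightarrow> (x, y) \<noteq> (x', y') \<Longrightarrow>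
      {x, y} \<inter> {x', y'} = {} \<and> col x y \<noteq> col x' y'" for x y x' y'
      using d rainbow unfolding P_def by auto
  qed (simp add: P_def)
  moreover have "card P = 4" using d unfolding P_def by simp
  ultimately show False using distinct_members by (simp add: card_insert_if)
qed

lemma card_members: "card A = 3" "card B = 3" "card C = 3"
  using members M_subset_F card_member by auto

lemma no_rainbow_3_matching_members:
  assumes "P \<in> {A, B, C}" and "Q \<in> {A, B, C}" and "P \<noteq> Q"
  shows "no_rainbow_3_matching adj col P Q"
  unfolding no_rainbow_3_matching_def
proof (intro allI impI notI)
  fix p1 p2 p3 q1 q2 q3
  assume ps: "{p1, p2, p3} \<subseteq> P" and qs: "{q1, q2, q3} \<subseteq> Q"
    and dp: "distinct [p1, p2, p3]" and dq: "distinct [q1, q2, q3]"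
    and edges: "adj p1 q1" "adj p2 q2" "adj p3 q3"
    and rainbow: "distinct [col p1 q1, col p2 q2, col p3 q3]"
  have "P \<inter> Q = {}" using assms members members_disjoint by auto
  with ps qs have d: "distinct [p1, q1, p2, q2, p3, q3]" using dp dq by auto
  define R where "R = {(p1, q1), (p2, q2), (p3, q3)}"
  have "card R \<le> card {P, Q}"
  proof (rule rainbow_matching_le)
    show "{P, Q} \<subseteq> M" using assms members by auto
    show "(x, y) \<in> R \<Longrightarrow> adj x y \<and> x \<in> \<Union>{P, Q} \<and> y \<in> \<Union>{P, Q}" for x y
      using edges ps qs unfolding R_def by auto
    show "(x, y) \<in> R \<Longrightarrow> (x', y') \<in> R \<Longrightarrow> (x, y) \<noteq> (x', y') \<Longrightarrow>
      {x, y} \<inter> {x', y'} = {} \<and> col x y \<noteq> col x' y'" for x y x' y'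
      using d rainbow unfolding R_def by auto
  qed (simp add: R_def)
  moreover have "card R = 3" using dp unfolding R_def by simp
  ultimately show False using \<open>P \<noteq> Q\<close> by simp
qed

sublocale rainbow_triple A B C adj col
proof
  show "card A = 3" "card B = 3" "card C = 3" by (fact card_members)+
  show "A \<inter> B = {}" "A \<inter> C = {}" "B \<inter> C = {}"
    using members distinct_members members_disjoint by auto
  show "no_rainbow_3_matching adj col A B" "no_rainbow_3_matching adj col A C"
    "no_rainbow_3_matching adj col B C"
    using no_rainbow_3_matching_members distinct_members by auto
qed (fact adj_sym col_sym proper no_rainbow_4_matching)+

lemma D2_ABC_subset_edges:
  "D2_ABC F M A B C \<subseteq>
    (\<lambda>(x, y). {x, y, col x y}) `
      (edges_between adj A B \<union> edges_between adj A C \<union> edges_between adj B C)"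
    (is "_ \<subseteq> ?edge ` ?U")
proof
  fix E assume E: "E \<in> D2_ABC F M A B C"
  then obtain x y u
    where E_eq: "E = {x, y, u}" "x \<noteq> y" "x \<in> A \<union> B \<union> C" "y \<in> A \<union> B \<union> C" "u \<notin> X_M M"
    by (rule D2_ABC_shape)
  have "col x y = u" "col y x = u" using col_eq E E_eq col_sym by auto
  have "adj x y" unfolding adj_def using E E_eq by auto
  have separated: "\<not> (x \<in> N \<and> y \<in> N)" if "N \<in> {A, B, C}" for N
  proof
    assume "x \<in> N \<and> y \<in> N"
    moreover have "N \<in> F" using that members M_subset_F by auto
    ultimately have "E = N"
      using linear_family_eq_if_two_common[OF linear, of E N x y] E E_eq(1,2)
        D2_ABC_subset_F finite_member by auto
    then show False using E_eq(1,5) that members_subset_X_M by auto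
  qed
  moreover have "adj y x" using \<open>adj x y\<close> adj_sym by simp
  ultimately have "(x, y) \<in> ?U \<or> (y, x) \<in> ?U"
    using E_eq(3,4) \<open>adj x y\<close> unfolding edges_between_def by auto
  moreover have "E = ?edge (x, y)" "E = ?edge (y, x)"
    using E_eq(1) \<open>col x y = u\<close> \<open>col y x = u\<close> by auto
  ultimately show "E \<in> ?edge ` ?U" by (auto intro: rev_image_eqI)
qed

theorem card_D2_ABC_le_21: "card (D2_ABC F M A B C) \<le> 21"
proof -
  let ?U = "edges_between adj A B \<union> edges_between adj A C \<union> edges_between adj B C"
  have "finite ?U" using finite_A finite_B finite_C by (simp add: finite_edges_between)
  then have "card (D2_ABC F M A B C) \<le> card ((\<lambda>(x, y). {x, y, col x y}) ` ?U)"
    by (intro card_mono D2_ABC_subset_edges) simp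
  also have "\<dots> \<le> card ?U" using \<open>finite ?U\<close> by (rule card_image_le)
  also have "\<dots> \<le> edge_count adj A B + edge_count adj A C + edge_count adj B C"
    using card_Un_le[of "edges_between adj A B \<union> edges_between adj A C" "edges_between adj B C"]
      card_Un_le[of "edges_between adj A B" "edges_between adj A C"] by linarith
  also have "\<dots> \<le> 21" by (rule edge_count_le_21)
  finally show ?thesis .
qed

end

theorem proposition5:
  fixes F M :: "'a set set" and A B C :: "'a set"
  assumes "finite F"
    and "uniform3 F"
    and "linear_family F"
    and "maximum_matching F M"
    and "A \<in> M" and "B \<in> M" and "C \<in> M"
    and "A \<noteq> B" and "A \<noteq> C" and "B \<noteq> C"
  shows "card (D2_ABC F M A B C) \<le> 21"
proof -
  interpret D2_setting F M A B C using assms by unfold_locales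
  show ?thesis by (rule card_D2_ABC_le_21)
qed

end
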